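(* Let $0<q<1$. Define the $q$-Genocchi numbers $g_{n,q}$ and $q$-Genocchi polynomials $G_{n,q}(x)$ by \[ \frac{2t}{e_q(t)+1}=\sum_{n=0}^\infty g_{n,q}\frac{t^n}{[n]_q!},\qquad \frac{2t}{e_q(t)+1}e_q(tx)=\sum_{n=0}^\infty G_{n,q}(x)\frac{t^n}{[n]_q!}. \] Then for every positive integer $n$, $G_{n,q}(x)$ satisfies the $q$-difference equation \[ \sum_{k=2}^{n}\frac{q^{n-k-1}g_{k,q}}{2[k]_q!}D_{q,x}^kG_{n,q}(x)-\frac{q^{n-2}}{2}D_{q,x}G_{n,q}(x)+q^{n-1}G_{n,q}(x)+xq^nD_{q,x}G_{n,q}(x)-[n]_qG_{n,q}(qx)=0, \] i.e. \[ \frac{1}{2q}\frac{g_{n,q}}{[n]_q!}D_{q,x}^nG_{n,q}(x)+\frac{g_{n-1,q}}{2[n-1]_q!}D_{q,x}^{n-1}G_{n,q}(x)+\dots+\frac{q^{n-3}g_{2,q}}{2[2]_q!}D_{q,x}^2G_{n,q}(x)-\frac{q^{n-2}}{2}D_{q,x}G_{n,q}(x)+q^{n-1}G_{n,q}(x)+xq^nD_{q,x}G_{n,q}(x)-[n]_qG_{n,q}(qx)=0. \]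
   Context: $[n]_q=\frac{1-q^n}{1-q}$, $[0]_q!=1$, $[n]_q!=[n]_q\cdots[1]_q$, $e_q(t)=\sum_{n\ge0}\frac{t^n}{[n]_q!}$. The $q$-derivative is $D_{q,x}f(x)=\frac{f(qx)-f(x)}{(q-1)x}$ (on polynomials $D_{q,x}x^n=[n]_qx^{n-1}$), and $D_{q,x}^k$ is its $k$-fold iterate. *)

theory Defs
  imports Complex_Main "HOL-Computational_Algebra.Formal_Power_Series"
begin

definition qint :: "real \<Rightarrow> nat \<Rightarrow> real" where
  "qint q n = (1 - q ^ n) / (1 - q)"

definition qfact :: "real \<Rightarrow> nat \<Rightarrow> real" where
  "qfact q n = (\<Prod>i = 1..n. qint q i)"

definition eq_fps :: "real \<Rightarrow> real fps" where
  "eq_fps q = Abs_fps (\<lambda>n. 1 / qfact q n)"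

definition eq_fps_scaled :: "real \<Rightarrow> real \<Rightarrow> real fps" where
  "eq_fps_scaled q x = Abs_fps (\<lambda>n. x ^ n / qfact q n)"

text \<open>Generating function 2t/(e_q(t)+1) (constant term of e_q(t)+1 is 2, so invertible).\<close>
definition genocchi_gf :: "real \<Rightarrow> real fps" where
  "genocchi_gf q = fps_const 2 * fps_X * inverse (eq_fps q + 1)"

definition qgenocchi_num :: "real \<Rightarrow> nat \<Rightarrow> real" where
  "qgenocchi_num q n = fps_nth (genocchi_gf q) n * qfact q n"

definition qgenocchi_poly :: "real \<Rightarrow> nat \<Rightarrow> real \<Rightarrow> real" where
  "qgenocchi_poly q n x = fps_nth (genocchi_gf q * eq_fps_scaled q x) n * qfact q n"

definition qD :: "real \<Rightarrow> (real \<Rightarrow> real) \<Rightarrow> real \<Rightarrow> real" where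
  "qD q f x = (f (q * x) - f x) / ((q - 1) * x)"

definition qD_iter :: "real \<Rightarrow> nat \<Rightarrow> (real \<Rightarrow> real) \<Rightarrow> real \<Rightarrow> real" where
  "qD_iter q k f = (qD q ^^ k) f"

end

theory Submission
  imports Defs
begin

text \<open>
  The polynomials G_{n,q}(x)/[n]_q! are the coefficients of A(t) e_q(xt), where
  A(t) = 2t/(e_q(t)+1), so they form a q-Appell sequence: D_{q,x} lowers the index, and each
  D_{q,x}^k G_{n,q} in the equation is [n]_q! times a lower member of the sequence.
  From e_q(qt) = (1 + (q-1)t) e_q(t) one gets the functional equation
  (1-q)/2 A(t) A(qt) + (q-1) t A(qt) + A(qt) = q A(t).
  Multiplied by e_q(qxt) it becomes an identity of power series in t whose n-th coefficient is
  q/[n]_q! times the left-hand side of the q-difference equation; the factor [n]_q is produced by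
  the operator f(t) \<mapsto> (f(t) - f(qt))/(1-q).
\<close>

unbundle fps_syntax

lemma qint_nonzero:
  assumes "0 < q" "q \<noteq> 1" "0 < n"
  shows "qint q n \<noteq> 0"
proof -
  have "q ^ n \<noteq> 1"
    using assms power_eq_1_iff[of q n] by auto
  with assms show ?thesis
    by (simp add: qint_def)
qed

lemma qfact_Suc: "qfact q (Suc n) = qfact q n * qint q (Suc n)"
  by (simp add: qfact_def prod.nat_ivl_Suc')

lemma qfact_nonzero: "0 < q \<Longrightarrow> q \<noteq> 1 \<Longrightarrow> qfact q n \<noteq> 0"
  by (induction n) (simp_all add: qfact_Suc qint_nonzero qfact_def)

lemma power_eq_qint: "q \<noteq> 1 \<Longrightarrow> q ^ n = 1 + (q - 1) * qint q n"
  by (simp add: qint_def field_simps)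

lemma eq_fps_scaled_compose_linear:
  "eq_fps_scaled q y oo (fps_const c * fps_X) = eq_fps_scaled q (c * y)"
  by (simp add: fps_eq_iff eq_fps_scaled_def power_mult_distrib)

lemma eq_fps_scaled_dilate:
  assumes "0 < q" "q \<noteq> 1"
  shows "eq_fps_scaled q (q * y) = eq_fps_scaled q y * (1 + fps_const ((q - 1) * y) * fps_X)"
proof (rule fps_ext)
  fix n
  show "eq_fps_scaled q (q * y) $ n = (eq_fps_scaled q y * (1 + fps_const ((q - 1) * y) * fps_X)) $ n"
  proof (cases n)
    case (Suc m)
    have "qfact q m \<noteq> 0" "qint q (Suc m) \<noteq> 0"
      using assms qfact_nonzero qint_nonzero by auto
    have "(q * y) ^ n / qfact q n = (1 + (q - 1) * qint q n) * y ^ n / qfact q n"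
      by (simp add: power_mult_distrib power_eq_qint[OF assms(2)])
    also have "\<dots> = y ^ n / qfact q n + (q - 1) * y * (y ^ m / qfact q m)"
      using Suc \<open>qfact q m \<noteq> 0\<close> \<open>qint q (Suc m) \<noteq> 0\<close>
      by (simp add: qfact_Suc field_simps)
    finally show ?thesis
      using Suc by (simp add: eq_fps_scaled_def algebra_simps)
  qed (simp add: eq_fps_scaled_def)
qed

lemma eq_fps_eq_scaled: "eq_fps q = eq_fps_scaled q 1"
  by (simp add: eq_fps_def eq_fps_scaled_def)

lemma genocchi_gf_functional_equation:
  assumes q: "0 < q" "q \<noteq> 1"
  defines "A \<equiv> genocchi_gf q"
  defines "B \<equiv> genocchi_gf q oo (fps_const q * fps_X)"
  shows "fps_const ((1 - q) / 2) * A * B + fps_const (q - 1) * fps_X * B + B = fps_const q * A"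
proof -
  define E where "E = eq_fps q"
  define V where "V = E * (1 + fps_const (q - 1) * fps_X) + 1"
  have E1: "(E + 1) $ 0 \<noteq> 0"
    by (simp add: E_def eq_fps_def qfact_def)
  have A: "A * (E + 1) = fps_const 2 * fps_X"
    using E1 by (simp add: A_def E_def genocchi_gf_def mult.assoc inverse_mult_eq_1)
  have "B * V = (A * (E + 1)) oo (fps_const q * fps_X)"
    by (simp add: B_def A_def V_def E_def fps_compose_mult_distrib fps_compose_add_distrib
        eq_fps_eq_scaled eq_fps_scaled_compose_linear eq_fps_scaled_dilate[OF q, of 1, simplified])
  also have "\<dots> = fps_const (2 * q) * fps_X"
    by (simp add: A fps_compose_mult_distrib)
  finally have B: "B * V = fps_const (2 * q) * fps_X" .
  define P where
    "P = fps_const ((1 - q) / 2) * A * B + fps_const (q - 1) * fps_X * B + B - fps_const q * A"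
  have "P * ((E + 1) * V) = fps_const ((1 - q) / 2) * (A * (E + 1)) * (B * V)
      + fps_const (q - 1) * fps_X * (B * V) * (E + 1) + (B * V) * (E + 1)
      - fps_const q * (A * (E + 1)) * V"
    by (simp add: P_def algebra_simps)
  also have "\<dots> = fps_const ((1 - q) / 2) * (fps_const 2 * fps_X) * (fps_const (2 * q) * fps_X)
      + fps_const (q - 1) * fps_X * (fps_const (2 * q) * fps_X) * (E + 1)
      + fps_const (2 * q) * fps_X * (E + 1)
      - fps_const q * (fps_const 2 * fps_X) * V"
    by (simp only: A B)
  also have "\<dots> = 0"
  proof -
    define Q where "Q = fps_const q"
    have "fps_const ((1 - q) / 2) * (fps_const 2 * fps_X) = (1 - Q) * fps_X"
      "fps_const (q - 1) = Q - 1" "fps_const (2 * q) = 2 * Q" "fps_const 2 = (2 :: real fps)"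
      by (simp_all add: Q_def numeral_fps_const fps_eq_iff)
    then show ?thesis
      by (simp only: V_def flip: Q_def) (simp add: algebra_simps)
  qed
  finally have "P * ((E + 1) * V) = 0" .
  moreover have "V $ 0 \<noteq> 0"
    by (simp add: V_def E_def eq_fps_def qfact_def)
  then have "(E + 1) * V \<noteq> 0"
    using E1 by (metis fps_nonzero_nth mult_eq_0_iff)
  ultimately show ?thesis
    by (simp add: P_def)
qed

definition qappell :: "real \<Rightarrow> real fps \<Rightarrow> nat \<Rightarrow> real \<Rightarrow> real" where
  "qappell q a n x = (a * eq_fps_scaled q x) $ n"

lemma qgenocchi_poly_eq_qappell:
  "qgenocchi_poly q n = (\<lambda>x. qfact q n * qappell q (genocchi_gf q) n x)"
  by (simp add: fun_eq_iff qgenocchi_poly_def qappell_def)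

lemma qappell_eq_sum: "qappell q a n x = (\<Sum>i\<le>n. x ^ i / qfact q i * a $ (n - i))"
  by (simp add: qappell_def mult.commute[of a] fps_mult_nth eq_fps_scaled_def atMost_atLeast0)

lemma qD_sum: "qD q (\<lambda>x. \<Sum>i\<in>I. f i x) x = (\<Sum>i\<in>I. qD q (f i) x)"
  by (simp add: qD_def sum_subtractf flip: sum_divide_distrib)

lemma qD_mult_const: "qD q (\<lambda>x. f x * c) x = qD q f x * c"
  by (simp add: qD_def algebra_simps diff_divide_distrib)

lemma qD_const: "qD q (\<lambda>x. c) x = 0"
  by (simp add: qD_def)

lemma qD_qmonomial:
  assumes "0 < q" "q \<noteq> 1" "x \<noteq> 0"
  shows "qD q (\<lambda>x. x ^ Suc i / qfact q (Suc i)) x = x ^ i / qfact q i"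
proof -
  have "(q * x) ^ Suc i - x ^ Suc i = (q ^ Suc i - 1) * x ^ Suc i"
    by (simp add: power_mult_distrib algebra_simps)
  also have "q ^ Suc i - 1 = (q - 1) * qint q (Suc i)"
    by (simp only: power_eq_qint[OF assms(2)])
  finally have diff: "(q * x) ^ Suc i - x ^ Suc i = (q - 1) * x * (qint q (Suc i) * x ^ i)"
    by simp
  have "qfact q i \<noteq> 0" "qint q (Suc i) \<noteq> 0"
    using assms qfact_nonzero qint_nonzero by auto
  then show ?thesis
    using assms unfolding qD_def diff_divide_distrib[symmetric] diff by (simp add: qfact_Suc)
qed

lemma qD_qappell:
  assumes "0 < q" "q \<noteq> 1" "x \<noteq> 0"
  shows "qD q (qappell q a (Suc n)) x = qappell q a n x"
proof -
  have "qD q (qappell q a (Suc n)) x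
      = (\<Sum>i\<le>Suc n. qD q (\<lambda>x. x ^ i / qfact q i) x * a $ (Suc n - i))"
    by (simp only: qappell_eq_sum[abs_def] qD_sum qD_mult_const)
  also have "\<dots> = (\<Sum>i\<le>n. qD q (\<lambda>x. x ^ Suc i / qfact q (Suc i)) x * a $ (n - i))"
    by (simp only: sum.atMost_Suc_shift) (simp add: qD_const)
  also have "\<dots> = qappell q a n x"
    by (simp only: qD_qmonomial[OF assms]) (simp add: qappell_eq_sum)
  finally show ?thesis .
qed

lemma qD_iter_mult_const: "qD_iter q k (\<lambda>x. c * f x) = (\<lambda>x. c * qD_iter q k f x)"
  by (induction k) (simp_all add: qD_iter_def qD_def fun_eq_iff algebra_simps diff_divide_distrib)

lemma qD_iter_qappell:
  assumes "0 < q" "q \<noteq> 1"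
  shows "k \<le> n \<Longrightarrow> x \<noteq> 0 \<Longrightarrow> qD_iter q k (qappell q a n) x = qappell q a (n - k) x"
proof (induction k arbitrary: x)
  case 0
  then show ?case
    by (simp add: qD_iter_def)
next
  case (Suc k)
  \<comment> \<open>qD only evaluates its argument at x and q x, both nonzero, where the IH applies\<close>
  have "qD_iter q (Suc k) (qappell q a n) x = qD q (qappell q a (Suc (n - Suc k))) x"
    using Suc assms by (simp add: qD_iter_def qD_def Suc_diff_Suc)
  also have "\<dots> = qappell q a (n - Suc k) x"
    using Suc.prems assms by (simp add: qD_qappell)
  finally show ?case .
qed

text \<open>The q-analogue of fps_XD: multiplying the n-th coefficient by [n]_q is t D_{q,t}.\<close>

definition fps_qXD :: "real \<Rightarrow> real fps \<Rightarrow> real fps" where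
  "fps_qXD q f = Abs_fps (\<lambda>n. qint q n * f $ n)"

lemma fps_qXD_eq:
  "q \<noteq> 1 \<Longrightarrow> fps_const (1 - q) * fps_qXD q f = f - (f oo (fps_const q * fps_X))"
  by (simp add: fps_eq_iff fps_qXD_def qint_def) (simp add: field_simps)

lemma qappell_genocchi_gf_relation:
  fixes q x :: real
  assumes q: "0 < q" "q \<noteq> 1"
  defines "A \<equiv> genocchi_gf q"
  defines "P \<equiv> (A * eq_fps_scaled q x) oo (fps_const q * fps_X)"
  defines "R \<equiv> A * eq_fps_scaled q (q * x)"
  shows "fps_const (1 / 2) * (A - 2 * fps_X) * P + P + fps_const (q\<^sup>2 * x) * fps_X * P
    = fps_const q * fps_qXD q R"
proof -
  define B where "B = A oo (fps_const q * fps_X)"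
  define F where "F = eq_fps_scaled q (q * x)"
  have P: "P = B * F"
    by (simp add: P_def B_def F_def fps_compose_mult_distrib eq_fps_scaled_compose_linear)
  have F: "F oo (fps_const q * fps_X) = F * (1 + fps_const ((q - 1) * (q * x)) * fps_X)"
    unfolding F_def eq_fps_scaled_compose_linear by (rule eq_fps_scaled_dilate[OF q])
  have "R = A * F" "R oo (fps_const q * fps_X) = B * (F oo (fps_const q * fps_X))"
    by (simp_all add: R_def F_def B_def fps_compose_mult_distrib)
  then have "R - (R oo (fps_const q * fps_X)) = A * F - B * (F oo (fps_const q * fps_X))"
    by simp
  also have "\<dots> = (A - B * (1 + fps_const ((q - 1) * (q * x)) * fps_X)) * F"
    unfolding F by (simp add: algebra_simps)
  finally have R:
    "R - (R oo (fps_const q * fps_X)) = (A - B * (1 + fps_const ((q - 1) * (q * x)) * fps_X)) * F" .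
  have functional:
    "fps_const ((1 - q) / 2) * A * B + fps_const (q - 1) * fps_X * B + B - fps_const q * A = 0"
    using genocchi_gf_functional_equation[OF q] by (simp add: A_def B_def)
  define Q where "Q = fps_const q"
  define h where "h = fps_const (1 / 2 :: real)"
  have const_eqs: "fps_const ((1 - q) / 2) = (1 - Q) * h" "fps_const (q - 1) = Q - 1"
    "fps_const (q\<^sup>2 * x) = Q * Q * fps_const x"
    "fps_const ((q - 1) * (q * x)) = (Q - 1) * Q * fps_const x"
    "fps_const (1 - q) = 1 - Q" "fps_const q = Q" "fps_const (1 / 2) = h"
    by (simp_all add: Q_def h_def fps_eq_iff power2_eq_square)
  have h2: "h * 2 = 1"
    by (simp add: h_def fps_eq_iff numeral_fps_const)
  have "fps_const (1 - q) * (fps_const (1 / 2) * (A - 2 * fps_X) * P + P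
      + fps_const (q\<^sup>2 * x) * fps_X * P - fps_const q * fps_qXD q R)
    = F * (fps_const ((1 - q) / 2) * A * B + fps_const (q - 1) * fps_X * B + B - fps_const q * A)"
    unfolding right_diff_distrib mult.left_commute[of "fps_const (1 - q)" "fps_const q"]
      fps_qXD_eq[OF q(2)] R P
    unfolding const_eqs by (simp add: algebra_simps h2)
  then show ?thesis
    using q(2) by (simp add: functional)
qed

lemma genocchi_gf_nth_0: "genocchi_gf q $ 0 = 0"
  by (simp add: genocchi_gf_def)

lemma genocchi_gf_nth_1: "genocchi_gf q $ 1 = 1"
proof -
  have "(eq_fps q + 1) $ 0 = 2"
    by (simp add: eq_fps_def qfact_def)
  then show ?thesis
    by (simp add: genocchi_gf_def fps_mult_nth_1)
qed

lemma qappell_genocchi_relation: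
  fixes q x :: real
  assumes q: "0 < q" "q \<noteq> 1" and n: "1 \<le> n"
  defines "G \<equiv> qappell q (genocchi_gf q)"
  shows "(\<Sum>k = 2..n. q ^ (n - k) * (genocchi_gf q $ k / 2) * G (n - k) x)
      - q ^ (n - 1) / 2 * G (n - 1) x + q ^ n * G n x + x * q ^ Suc n * G (n - 1) x
      - q * qint q n * G n (q * x) = 0"
proof -
  define A where "A = genocchi_gf q"
  define P where "P = (A * eq_fps_scaled q x) oo (fps_const q * fps_X)"
  define R where "R = A * eq_fps_scaled q (q * x)"
  have P_nth: "P $ m = q ^ m * G m x" for m
    by (simp add: P_def G_def A_def qappell_def)
  have "(A * P) $ n = (\<Sum>k = 0..n. A $ k * P $ (n - k))"
    by (simp add: fps_mult_nth)
  also have "\<dots> = P $ (n - 1) + (\<Sum>k = 2..n. A $ k * P $ (n - k))"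
    using n by (simp add: sum.atLeast_Suc_atMost numeral_2_eq_2 A_def genocchi_gf_nth_0
        genocchi_gf_nth_1[unfolded One_nat_def])
  finally have AP: "(A * P) $ n = P $ (n - 1) + (\<Sum>k = 2..n. A $ k * P $ (n - k))" .
  have half: "fps_const (1 / 2 :: real) * 2 = 1"
    by (simp add: fps_eq_iff numeral_fps_const)
  have relation: "fps_const (1 / 2) * (A * P) - fps_X * P + P + fps_const (q\<^sup>2 * x) * (fps_X * P)
      = fps_const q * fps_qXD q R"
    using qappell_genocchi_gf_relation[OF q, of x]
    by (simp add: A_def P_def R_def right_diff_distrib left_diff_distrib mult.assoc[symmetric] half)
  have "(A * P) $ n / 2 - P $ (n - 1) + P $ n + q\<^sup>2 * x * P $ (n - 1) = q * qint q n * G n (q * x)"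
    using arg_cong[OF relation, of "\<lambda>f. f $ n"] n
    by (simp add: fps_X_mult_nth fps_qXD_def R_def G_def A_def qappell_def)
  moreover have "q ^ n = q * q ^ (n - 1)"
    using n by (simp flip: power_Suc)
  ultimately show ?thesis
    unfolding AP
    by (simp add: P_nth A_def power2_eq_square diff_divide_distrib algebra_simps flip: sum_divide_distrib)
qed

lemma qD_iter_qgenocchi_poly:
  assumes "0 < q" "q \<noteq> 1" "k \<le> n" "x \<noteq> 0"
  shows "qD_iter q k (qgenocchi_poly q n) x = qfact q n * qappell q (genocchi_gf q) (n - k) x"
  using qD_iter_qappell[OF assms] by (simp add: qgenocchi_poly_eq_qappell qD_iter_mult_const)

lemma power_int_diff_Suc:
  fixes q :: real
  assumes "q \<noteq> 0" "k \<le> n"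
  shows "q powi (int n - int k - 1) = q ^ (n - k) / q"
proof -
  have "q powi (int n - int k - 1) = q powi int (n - k) / q"
    using assms power_int_diff[of q "int (n - k)" 1] by (simp add: of_nat_diff)
  then show ?thesis
    by (simp add: power_int_of_nat)
qed

theorem theorem8:
  fixes q x :: real and n :: nat
  assumes "0 < q" and "q < 1" and "1 \<le> n" and "x \<noteq> 0"
  shows "(\<Sum>k = 2..n. q powi (int n - int k - 1) * qgenocchi_num q k / (2 * qfact q k)
              * qD_iter q k (qgenocchi_poly q n) x)
         - q powi (int n - 2) / 2 * qD q (qgenocchi_poly q n) x
         + q ^ (n - 1) * qgenocchi_poly q n x
         + x * q ^ n * qD q (qgenocchi_poly q n) x
         - qint q n * qgenocchi_poly q n (q * x) = 0"
proof -
  have q: "0 < q" "q \<noteq> 1"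
    using assms by auto
  define G where "G = qappell q (genocchi_gf q)"
  define F where "F = qfact q n"
  have poly: "qgenocchi_poly q n y = F * G n y" for y
    by (simp add: qgenocchi_poly_eq_qappell F_def G_def)
  have D1: "qD q (qgenocchi_poly q n) x = F * G (n - 1) x"
    using qD_iter_qgenocchi_poly[OF q _ assms(4), of 1] assms(3)
    by (simp add: qD_iter_def F_def G_def)
  have S: "(\<Sum>k = 2..n. q powi (int n - int k - 1) * qgenocchi_num q k / (2 * qfact q k)
              * qD_iter q k (qgenocchi_poly q n) x)
      = F / q * (\<Sum>k = 2..n. q ^ (n - k) * (genocchi_gf q $ k / 2) * G (n - k) x)"
    unfolding sum_distrib_left using qfact_nonzero[OF q] q
    by (intro sum.cong) (simp_all add: qD_iter_qgenocchi_poly assms(4) power_int_diff_Suc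
        qgenocchi_num_def F_def G_def)
  have powers: "q powi (int n - 2) = q ^ (n - 1) / q" "q ^ n = q * q ^ (n - 1)"
    using assms(1,3) power_int_diff_Suc[of q 1 n] by (simp_all flip: power_Suc)
  have "(\<Sum>k = 2..n. q powi (int n - int k - 1) * qgenocchi_num q k / (2 * qfact q k)
              * qD_iter q k (qgenocchi_poly q n) x)
         - q powi (int n - 2) / 2 * qD q (qgenocchi_poly q n) x
         + q ^ (n - 1) * qgenocchi_poly q n x
         + x * q ^ n * qD q (qgenocchi_poly q n) x
         - qint q n * qgenocchi_poly q n (q * x)
      = F / q * ((\<Sum>k = 2..n. q ^ (n - k) * (genocchi_gf q $ k / 2) * G (n - k) x)
         - q ^ (n - 1) / 2 * G (n - 1) x + q ^ n * G n x + x * q ^ Suc n * G (n - 1) x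
         - q * qint q n * G n (q * x))"
    unfolding S D1 poly powers power_Suc using q by (simp add: field_simps)
  also have "\<dots> = 0"
    using qappell_genocchi_relation[OF q assms(3), of x] by (simp add: G_def)
  finally show ?thesis .
qed

end
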